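(* Let $\mathcal{S}\subseteq\mathcal{P}_{fin}(\mathbb{N})$ be an IP set, let $\mathcal{B}\subseteq\mathcal{S}$ be finite, let $r\geq 1$, and let $c:NU(\mathcal{S})\rightarrow[1,r]$ be a coloring. Then at least one of the following holds: (1) there is a finite $\mathcal{D}\subseteq\mathcal{S}-\mathcal{B}$ such that for every $S\in(\mathcal{S}-\mathcal{B})-\mathcal{D}$ there is a $D\in NU(\mathcal{D})$ such that $\mathcal{B}$ does not half-match $D\cup S$; or (2) there is an IP set $\mathcal{T}\subseteq\mathcal{S}-\mathcal{B}$ such that $\mathcal{B}$ half-matches $\mathcal{T}$.
   Context: $\mathcal{P}_{fin}(\mathbb{N})$ is the set of finite subsets of $\mathbb{N}$. For $\mathcal{S}\subseteq\mathcal{P}_{fin}(\mathbb{N})$, $NU(\mathcal{S})$ denotes the set of non-empty sets which are unions of finitely many elements of $\mathcal{S}$. A set $\mathcal{S}\subseteq\mathcal{P}_{fin}(\mathbb{N})$ is an IP set if it is closed under finite unions and contains an infinite family of pairwise disjoint elements. For $B\in\mathcal{S}$, $\mathcal{S}-B:=\{T\in\mathcal{S}: T\cap B=\emptyset\}$, and for $\mathcal{B}\subseteq\mathcal{S}$, $\mathcal{S}-\mathcal{B}:=\bigcap_{B\in\mathcal{B}}(\mathcal{S}-B)$. Relative to a coloring $c$: a family $\mathcal{D}$ half-matches a set $B$ if there is $D\in\mathcal{D}$ with $c(B)=c(D\cup B)$; $\mathcal{D}$ half-matches a family $\mathcal{B}$ if it half-matches every $B\in\mathcal{B}$. *)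

theory Defs
  imports Main
begin

definition Pfin :: "nat set set" where
  "Pfin = {A. finite A}"

definition NU :: "nat set set \<Rightarrow> nat set set" where
  "NU F = {A. A \<noteq> {} \<and> (\<exists>G. finite G \<and> G \<subseteq> F \<and> A = \<Union>G)}"

definition IP_set :: "nat set set \<Rightarrow> bool" where
  "IP_set S \<longleftrightarrow> S \<subseteq> Pfin
     \<and> (\<forall>G. finite G \<and> G \<noteq> {} \<and> G \<subseteq> S \<longrightarrow> \<Union>G \<in> S)
     \<and> (\<exists>F. F \<subseteq> S \<and> infinite F \<and> pairwise disjnt F)"

definition minus_set :: "nat set set \<Rightarrow> nat set \<Rightarrow> nat set set" where
  "minus_set S B = {T \<in> S. T \<inter> B = {}}"

text \<open>S - \<B> for a family: intersection of S - B over B in \<B> (equal to S if \<B> is empty)\<close>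
definition minus_fam :: "nat set set \<Rightarrow> nat set set \<Rightarrow> nat set set" where
  "minus_fam S \<B> = {T \<in> S. \<forall>B\<in>\<B>. T \<in> minus_set S B}"

definition half_matches_set :: "(nat set \<Rightarrow> nat) \<Rightarrow> nat set set \<Rightarrow> nat set \<Rightarrow> bool" where
  "half_matches_set c \<D> B \<longleftrightarrow> (\<exists>D\<in>\<D>. c B = c (D \<union> B))"

definition half_matches :: "(nat set \<Rightarrow> nat) \<Rightarrow> nat set set \<Rightarrow> nat set set \<Rightarrow> bool" where
  "half_matches c \<D> \<B> \<longleftrightarrow> (\<forall>B\<in>\<B>. half_matches_set c \<D> B)"

end

theory Submission
  imports Defs
begin

(* Suppose alternative (1) fails, i.e. every finite D \<subseteq> M = S - \<B>
   admits some S' \<in> M - D such that \<B> half-matches D' \<union> S' for all D' \<in> NU D.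
   Then any finite D \<subseteq> M can be extended by one more set z \<in> M - D, z \<noteq> {},
   such that \<B> half-matches z and every D' \<union> z with D' \<in> NU D: take a nonempty
   y \<in> S avoiding \<Union>\<B> \<union> \<Union>D (it exists because an IP set contains infinitely
   many pairwise disjoint sets), apply the failure of (1) to D \<union> {y} and put
   z = y \<union> S'.  Iterating this step by dependent choice over finite prefixes
   yields a sequence x of nonempty, pairwise disjoint sets in M such that \<B>
   half-matches x n and D \<union> x n for all D \<in> NU {x 0, ..., x (n-1)}.  Then
   T = NU (range x) is an IP set contained in M, and since every element of T is
   either some x m or D \<union> x m with D built from earlier terms, \<B> half-matches
   T; this is alternative (2). *)

lemma mem_minus_fam: "T \<in> minus_fam X \<D> \<longleftrightarrow> T \<in> X \<and> (\<forall>B\<in>\<D>. T \<inter> B = {})"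
  unfolding minus_fam_def minus_set_def by auto

definition union_closed :: "'a set set \<Rightarrow> bool" where
  "union_closed X \<longleftrightarrow> (\<forall>G. finite G \<and> G \<noteq> {} \<and> G \<subseteq> X \<longrightarrow> \<Union>G \<in> X)"

lemma IP_set_iff:
  "IP_set S \<longleftrightarrow> S \<subseteq> Pfin \<and> union_closed S \<and> (\<exists>F. F \<subseteq> S \<and> infinite F \<and> pairwise disjnt F)"
  unfolding IP_set_def union_closed_def ..

lemma union_closedD: "union_closed X \<Longrightarrow> finite G \<Longrightarrow> G \<noteq> {} \<Longrightarrow> G \<subseteq> X \<Longrightarrow> \<Union>G \<in> X"
  unfolding union_closed_def by blast

lemma union_closed_minus_fam:
  assumes "union_closed X"
  shows "union_closed (minus_fam X \<B>)"
  unfolding union_closed_def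
proof (intro allI impI)
  fix G assume G: "finite G \<and> G \<noteq> {} \<and> G \<subseteq> minus_fam X \<B>"
  then have "G \<subseteq> X" by (auto simp: mem_minus_fam)
  then have "\<Union>G \<in> X" using union_closedD[OF assms] G by blast
  moreover have "\<forall>g\<in>G. \<forall>B\<in>\<B>. g \<inter> B = {}" using G unfolding subset_iff mem_minus_fam by blast
  then have "\<forall>B\<in>\<B>. \<Union>G \<inter> B = {}" by blast
  ultimately show "\<Union>G \<in> minus_fam X \<B>" by (simp add: mem_minus_fam)
qed

lemma NU_subset_union_closed:
  assumes "union_closed X" "F \<subseteq> X"
  shows "NU F \<subseteq> X"
proof
  fix A assume "A \<in> NU F"
  then obtain G where G: "finite G" "G \<subseteq> F" "A = \<Union>G" "A \<noteq> {}" unfolding NU_def by blast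
  then have "G \<noteq> {}" by auto
  with G assms show "A \<in> X" using union_closedD by blast
qed

lemma union_closed_NU: "union_closed (NU F)"
  unfolding union_closed_def
proof (intro allI impI)
  fix G assume G: "finite G \<and> G \<noteq> {} \<and> G \<subseteq> NU F"
  then have "\<forall>A\<in>G. \<exists>H. finite H \<and> H \<subseteq> F \<and> A = \<Union>H" unfolding NU_def by blast
  from bchoice[OF this] obtain h where h: "\<forall>A\<in>G. finite (h A) \<and> h A \<subseteq> F \<and> A = \<Union>(h A)" ..
  have "\<Union>G = (\<Union>A\<in>G. \<Union>(h A))" using h by auto
  also have "\<dots> = \<Union>(\<Union>(h ` G))" by blast
  finally have "\<Union>G = \<Union>(\<Union>(h ` G))" .
  moreover have "finite (\<Union>(h ` G))" "\<Union>(h ` G) \<subseteq> F" using h G by auto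
  moreover have "\<Union>G \<noteq> {}" using G unfolding NU_def by blast
  ultimately show "\<Union>G \<in> NU F" unfolding NU_def by blast
qed

lemma NU_singleton: "y \<noteq> {} \<Longrightarrow> y \<in> F \<Longrightarrow> y \<in> NU F"
  unfolding NU_def by (intro CollectI conjI exI[of _ "{y}"]) auto

lemma NU_insert_Un: "D \<in> NU F \<Longrightarrow> D \<union> y \<in> NU (insert y F)"
proof -
  assume "D \<in> NU F"
  then obtain G where G: "finite G" "G \<subseteq> F" "D = \<Union>G" "D \<noteq> {}" unfolding NU_def by blast
  then have "D \<union> y = \<Union>(insert y G)" by auto
  then show ?thesis using G unfolding NU_def by blast
qed

text \<open>A property of all finite unions of a sequence follows from its validity for each
  term x n alone and for each term x n joined with a finite union of earlier terms
  (split off the term of largest index).\<close>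
lemma NU_range_induct:
  fixes x :: "nat \<Rightarrow> nat set"
  assumes single: "\<And>n. P (x n)"
    and extend: "\<And>n D. D \<in> NU (x ` {..<n}) \<Longrightarrow> P (D \<union> x n)"
    and A: "A \<in> NU (range x)"
  shows "P A"
proof -
  obtain G where G: "finite G" "G \<subseteq> range x" "A = \<Union>G" "A \<noteq> {}"
    using A unfolding NU_def by blast
  obtain I where I: "finite I" "G = x ` I" using finite_subset_image[OF G(1) G(2)] by blast
  have "I \<noteq> {}" using G I by auto
  define m where "m = Max I"
  have "m \<in> I" using I \<open>I \<noteq> {}\<close> m_def by simp
  have "i \<le> m" if "i \<in> I" for i using I(1) that m_def by simp
  then have earlier: "I - {m} \<subseteq> {..<m}" by force
  define D where "D = \<Union>(x ` (I - {m}))"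
  have A_split: "A = D \<union> x m" using G I \<open>m \<in> I\<close> D_def by auto
  show ?thesis
  proof (cases "D = {}")
    case True
    then show ?thesis using A_split single by simp
  next
    case False
    have "D \<in> NU (x ` {..<m})" unfolding NU_def D_def
      using False earlier I(1) D_def by (intro CollectI conjI exI[of _ "x ` (I - {m})"]) auto
    then show ?thesis using A_split extend by simp
  qed
qed

lemma IP_set_NU_range:
  fixes x :: "nat \<Rightarrow> nat set"
  assumes nonempty: "\<And>n. x n \<noteq> {}"
    and disjoint: "\<And>i j. i \<noteq> j \<Longrightarrow> x i \<inter> x j = {}"
    and fin: "\<And>n. finite (x n)"
  shows "IP_set (NU (range x))"
  unfolding IP_set_iff
proof (intro conjI)
  show "NU (range x) \<subseteq> Pfin"
  proof
    fix A assume "A \<in> NU (range x)"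
    then obtain G where G: "finite G" "G \<subseteq> range x" "A = \<Union>G" unfolding NU_def by blast
    then have "\<forall>g\<in>G. finite g" using fin by blast
    then show "A \<in> Pfin" unfolding Pfin_def using G by simp
  qed
  show "union_closed (NU (range x))" by (rule union_closed_NU)
  have "inj x"
  proof (rule injI)
    fix i j assume "x i = x j"
    then show "i = j" using disjoint[of i j] nonempty[of i] by auto
  qed
  then have "infinite (range x)" by (simp add: finite_image_iff)
  moreover have "pairwise disjnt (range x)"
  proof (rule pairwiseI)
    fix a b assume "a \<in> range x" "b \<in> range x" "a \<noteq> b"
    then obtain i j where "a = x i" "b = x j" "i \<noteq> j" by blast
    then show "disjnt a b" using disjoint by (simp add: disjnt_def)
  qed
  moreover have "range x \<subseteq> NU (range x)" using NU_singleton[OF nonempty] by blast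
  ultimately show "\<exists>F. F \<subseteq> NU (range x) \<and> infinite F \<and> pairwise disjnt F" by blast
qed

text \<open>An IP set contains a nonempty member avoiding any given finite set: only finitely
  many members of an infinite disjoint family can meet it.\<close>
lemma IP_set_avoid:
  assumes "IP_set S" "finite K"
  shows "\<exists>y\<in>S. y \<noteq> {} \<and> y \<inter> K = {}"
proof -
  obtain F where F: "F \<subseteq> S" "infinite F" "pairwise disjnt F"
    using assms(1) unfolding IP_set_def by blast
  let ?E = "{A\<in>F. A \<inter> K \<noteq> {}}"
  define g where "g A = (SOME k. k \<in> A \<inter> K)" for A
  have g: "A \<in> ?E \<Longrightarrow> g A \<in> A \<inter> K" for A unfolding g_def by (rule someI_ex) auto
  have "inj_on g ?E"
  proof (rule inj_onI)
    fix A B assume "A \<in> ?E" "B \<in> ?E" "g A = g B"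
    then have "\<not> disjnt A B" using g[of A] g[of B] unfolding disjnt_def by auto
    then show "A = B" using F(3) \<open>A \<in> ?E\<close> \<open>B \<in> ?E\<close> unfolding pairwise_def by blast
  qed
  moreover have "g ` ?E \<subseteq> K" using g by blast
  ultimately have "finite ?E" using assms(2) inj_on_finite by blast
  then have "infinite (F - ?E - {{}})" using F(2) by auto
  then obtain y where "y \<in> F - ?E - {{}}" by (metis finite.emptyI ex_in_conv)
  then show ?thesis using F(1) by blast
qed

lemma prefix_choice_seq:
  assumes extend: "\<And>D. finite D \<Longrightarrow> D \<subseteq> M \<Longrightarrow> \<exists>z\<in>M. P D z"
  shows "\<exists>x :: nat \<Rightarrow> 'a. \<forall>n. x n \<in> M \<and> P (x ` {..<n}) (x n)"
proof -
  define f where "f D = (SOME z. z \<in> M \<and> P D z)" for D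
  define L where "L = rec_nat [] (\<lambda>_ l. l @ [f (set l)])"
  define x where "x n = f (set (L n))" for n
  have prefix: "set (L n) = x ` {..<n}" for n
    by (induction n) (simp_all add: L_def x_def lessThan_Suc)
  have x_eq: "x n = f (x ` {..<n})" for n
    unfolding x_def[of n] prefix[of n] ..
  have seq: "x n \<in> M \<and> P (x ` {..<n}) (x n)" for n
  proof (induction n rule: less_induct)
    case (less n)
    then have "x ` {..<n} \<subseteq> M" by blast
    then have "\<exists>z. z \<in> M \<and> P (x ` {..<n}) z" using extend[of "x ` {..<n}"] by blast
    then have "f (x ` {..<n}) \<in> M \<and> P (x ` {..<n}) (f (x ` {..<n}))"
      unfolding f_def by (rule someI_ex)
    then show ?case by (simp only: x_eq[of n, symmetric])
  qed
  then show ?thesis by blast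
qed

definition good_extension ::
    "(nat set \<Rightarrow> nat) \<Rightarrow> nat set set \<Rightarrow> nat set set \<Rightarrow> nat set set \<Rightarrow> nat set \<Rightarrow> bool" where
  "good_extension c \<B> M \<D> z \<longleftrightarrow> z \<in> minus_fam M \<D> \<and> z \<noteq> {} \<and>
     half_matches_set c \<B> z \<and> (\<forall>D\<in>NU \<D>. half_matches_set c \<B> (D \<union> z))"

text \<open>The extension step: if alternative (1) fails, every finite \<D> \<subseteq> S - \<B> has a good
  extension inside S - \<B>.  It is y \<union> S', where y avoids \<B> and \<D>, and S' is the set
  provided by the failure of (1) for the family \<D> \<union> {y}.\<close>
lemma extension_step:
  assumes IP: "IP_set S" and "\<B> \<subseteq> S" "finite \<B>"
    and no_witness: "\<And>\<D>. finite \<D> \<Longrightarrow> \<D> \<subseteq> minus_fam S \<B> \<Longrightarrow>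
           \<exists>S'\<in>minus_fam (minus_fam S \<B>) \<D>. \<forall>D\<in>NU \<D>. half_matches_set c \<B> (D \<union> S')"
    and \<D>: "finite \<D>" "\<D> \<subseteq> minus_fam S \<B>"
  shows "\<exists>z\<in>minus_fam S \<B>. good_extension c \<B> (minus_fam S \<B>) \<D> z"
proof -
  let ?M = "minus_fam S \<B>"
  let ?hm = "half_matches_set c \<B>"
  have S_fin: "S \<subseteq> Pfin" and S_closed: "union_closed S" using IP by (simp_all add: IP_set_iff)
  have "?M \<subseteq> S" by (auto simp: mem_minus_fam)
  then have "\<B> \<union> \<D> \<subseteq> Pfin" using \<D> assms(2) S_fin by blast
  then have "\<forall>A\<in>\<B> \<union> \<D>. finite A" unfolding Pfin_def by blast
  then have K_fin: "finite (\<Union>\<B> \<union> \<Union>\<D>)" using \<D>(1) assms(3) by auto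
  obtain y where y: "y \<in> S" "y \<noteq> {}" "y \<inter> (\<Union>\<B> \<union> \<Union>\<D>) = {}"
    using IP_set_avoid[OF IP K_fin] by blast
  then have yM: "y \<in> ?M" unfolding mem_minus_fam by blast
  with \<D> have "finite (insert y \<D>)" "insert y \<D> \<subseteq> ?M" by auto
  from no_witness[OF this] obtain S' where S': "S' \<in> minus_fam ?M (insert y \<D>)"
    and S'_hm: "\<forall>D\<in>NU (insert y \<D>). ?hm (D \<union> S')" by blast
  have S'M: "S' \<in> ?M" and S'_disj: "\<forall>B\<in>insert y \<D>. S' \<inter> B = {}"
    using S' unfolding mem_minus_fam[of S' ?M] by blast+
  have "\<Union>{y, S'} \<in> ?M"
    using yM S'M by (intro union_closedD[OF union_closed_minus_fam[OF S_closed]]) auto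
  then have "y \<union> S' \<in> ?M" by simp
  moreover have "y \<union> S' \<in> minus_fam ?M \<D>"
    using calculation y(3) S'_disj unfolding mem_minus_fam[of "y \<union> S'" ?M] by blast
  moreover have "?hm (y \<union> S')"
    using S'_hm NU_singleton[OF y(2), of "insert y \<D>"] by simp
  moreover have "?hm (D \<union> (y \<union> S'))" if "D \<in> NU \<D>" for D
    using S'_hm NU_insert_Un[OF that, of y] by (metis Un_assoc)
  ultimately show ?thesis using y(2) unfolding good_extension_def by blast
qed

lemma prefix_disjoint_seq:
  fixes x :: "nat \<Rightarrow> nat set"
  assumes avoid: "\<And>n. x n \<in> minus_fam M (x ` {..<n})" and "i \<noteq> j"
  shows "x i \<inter> x j = {}"
proof -
  have later: "x l \<inter> x k = {}" if "k < l" for k l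
    using avoid[of l] that unfolding mem_minus_fam[of "x l" M] by blast
  show ?thesis
  proof (cases "i < j")
    case True
    then show ?thesis using later by (simp add: Int_commute)
  next
    case False
    with \<open>i \<noteq> j\<close> have "j < i" by linarith
    then show ?thesis by (rule later)
  qed
qed

lemma IP_set_of_good_sequence:
  fixes x :: "nat \<Rightarrow> nat set"
  assumes IP: "IP_set S"
    and good: "\<And>n. good_extension c \<B> (minus_fam S \<B>) (x ` {..<n}) (x n)"
  shows "IP_set (NU (range x)) \<and> NU (range x) \<subseteq> minus_fam S \<B> \<and> half_matches c \<B> (NU (range x))"
proof -
  let ?M = "minus_fam S \<B>"
  have x: "\<And>n. x n \<in> minus_fam ?M (x ` {..<n})" "\<And>n. x n \<noteq> {}"
      "\<And>n. half_matches_set c \<B> (x n)"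
      "\<And>n D. D \<in> NU (x ` {..<n}) \<Longrightarrow> half_matches_set c \<B> (D \<union> x n)"
    using good unfolding good_extension_def by blast+
  have xM: "x n \<in> ?M" for n using x(1)[of n] unfolding mem_minus_fam[of "x n" ?M] by blast
  have S_closed: "union_closed S" and M_fin: "?M \<subseteq> Pfin"
    using IP by (auto simp: IP_set_iff minus_fam_def)
  have "finite (x n)" for n
    using xM M_fin unfolding Pfin_def by blast
  then have "IP_set (NU (range x))"
    using IP_set_NU_range x(2) prefix_disjoint_seq[OF x(1)] by blast
  moreover have "NU (range x) \<subseteq> ?M"
    using NU_subset_union_closed[OF union_closed_minus_fam[OF S_closed]] xM by blast
  moreover have "half_matches c \<B> (NU (range x))"
    unfolding half_matches_def
    using NU_range_induct[where P = "half_matches_set c \<B>" and x = x, OF x(3) x(4)] by blast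
  ultimately show ?thesis by blast
qed

theorem lemma2p1:
  fixes S \<B> :: "nat set set" and r :: nat and c :: "nat set \<Rightarrow> nat"
  assumes "IP_set S"
    and "\<B> \<subseteq> S" and "finite \<B>"
    and "r \<ge> 1"
    and "\<forall>A\<in>NU S. c A \<in> {1..r}"
  shows "(\<exists>\<D>. finite \<D> \<and> \<D> \<subseteq> minus_fam S \<B> \<and>
            (\<forall>S'\<in>minus_fam (minus_fam S \<B>) \<D>.
               \<exists>D\<in>NU \<D>. \<not> half_matches_set c \<B> (D \<union> S')))
       \<or> (\<exists>\<T>. IP_set \<T> \<and> \<T> \<subseteq> minus_fam S \<B> \<and> half_matches c \<B> \<T>)"
proof (subst disj_commute, rule disjCI)
  let ?M = "minus_fam S \<B>"
  let ?hm = "half_matches_set c \<B>"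
  assume no_witness_fam:
    "\<nexists>\<D>. finite \<D> \<and> \<D> \<subseteq> ?M \<and> (\<forall>S'\<in>minus_fam ?M \<D>. \<exists>D\<in>NU \<D>. \<not> ?hm (D \<union> S'))"
  have no_witness: "\<exists>S'\<in>minus_fam ?M \<D>. \<forall>D\<in>NU \<D>. ?hm (D \<union> S')"
    if "finite \<D>" "\<D> \<subseteq> ?M" for \<D>
    using no_witness_fam that by auto
  have "\<exists>z\<in>?M. good_extension c \<B> ?M \<D> z" if "finite \<D>" "\<D> \<subseteq> ?M" for \<D>
    using extension_step[OF assms(1-3) no_witness that] .
  from prefix_choice_seq[of ?M "good_extension c \<B> ?M", OF this]
  obtain x :: "nat \<Rightarrow> nat set" where "\<And>n. good_extension c \<B> ?M (x ` {..<n}) (x n)"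
    by blast
  with assms(1) show "\<exists>\<T>. IP_set \<T> \<and> \<T> \<subseteq> ?M \<and> half_matches c \<B> \<T>"
    using IP_set_of_good_sequence by blast
qed

end
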